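(* Consider the lower-bound construction with parameters $n_1,n_2,d,d_s,x$ where $0<x\le d_s$, $d\ge\max\{d_s\log n_1,\log^2 n_1\}$, $n_1\ge 2d^3$, and the $d$-regular graph on $S_1$ is an expander (its normalized Laplacian has spectral gap bounded below by an absolute constant). Let $r_{S_1}(s,t)$ be the effective resistance between $s$ and $t$ in the subgraph induced on $S_1\cup\{s,t\}$ and $r_{S_2}(s,t)$ the one in the subgraph induced on $S_2\cup\{s,t\}$ (when $x<d_s$). Then $$r_{S_1}(s,t)=\frac1x+O\Big(\frac{\log n_1}{dx}\Big)=\frac1x+O\Big(\frac{1}{d_s x}\Big),\qquad r_{S_2}(s,t)=\frac{2}{d_s-x}.$$
   Context: Lower-bound construction: $S_1$ and $S_2$ are disjoint vertex sets with $|S_1|=n_1$, $|S_2|=n_2$, $n_2\ll n_1$. On $S_1$ there is a $d$-regular expander graph; $S_2$ has no internal edges. A source vertex $s$ is added with $d_s$ neighbors: $x$ vertices $\mathcal{N}_1\subset S_1$ and $d_s-x$ vertices $\mathcal{N}_2\subset S_2$, chosen uniformly at random. A sink vertex $t$ is added and joined to every vertex of $S_1\cup S_2$. There are no other edges (in particular no edge $st$ and no edges between $S_1$ and $S_2$). Effective resistance in a graph $H$ is $(\mathbf{e}_s-\mathbf{e}_t)^T\mathbf{L}_H^\dagger(\mathbf{e}_s-\mathbf{e}_t)$, $\mathbf{L}_H$ the Laplacian of $H$. Constants hidden in $O(\cdot)$ are absolute (may depend on the expansion constant of $S_1$). *)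

theory Defs
  imports Complex_Main
begin

text \<open>Graphs are given by real (0/1) adjacency functions on vertices; all matrices indexed
by a finite vertex set V are functions 'a => 'a => real that vanish outside V x V.\<close>

definition deg :: "'a set \<Rightarrow> ('a \<Rightarrow> 'a \<Rightarrow> real) \<Rightarrow> 'a \<Rightarrow> real" where
  "deg V A u = (\<Sum>w\<in>V. A u w)"

definition lap :: "'a set \<Rightarrow> ('a \<Rightarrow> 'a \<Rightarrow> real) \<Rightarrow> 'a \<Rightarrow> 'a \<Rightarrow> real" where
  "lap V A u v = (if u \<in> V \<and> v \<in> V then (if u = v then deg V A u else 0) - A u v else 0)"

definition norm_lap :: "'a set \<Rightarrow> ('a \<Rightarrow> 'a \<Rightarrow> real) \<Rightarrow> 'a \<Rightarrow> 'a \<Rightarrow> real" where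
  "norm_lap V A u v = (if u \<in> V \<and> v \<in> V then
      (if u = v then 1 else 0) - A u v / sqrt (deg V A u * deg V A v) else 0)"

definition matmul :: "'a set \<Rightarrow> ('a \<Rightarrow> 'a \<Rightarrow> real) \<Rightarrow> ('a \<Rightarrow> 'a \<Rightarrow> real) \<Rightarrow> 'a \<Rightarrow> 'a \<Rightarrow> real" where
  "matmul V M N u v = (\<Sum>w\<in>V. M u w * N w v)"

definition transp_mat :: "('a \<Rightarrow> 'a \<Rightarrow> real) \<Rightarrow> 'a \<Rightarrow> 'a \<Rightarrow> real" where
  "transp_mat M u v = M v u"

definition is_pinv :: "'a set \<Rightarrow> ('a \<Rightarrow> 'a \<Rightarrow> real) \<Rightarrow> ('a \<Rightarrow> 'a \<Rightarrow> real) \<Rightarrow> bool" where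
  "is_pinv V L M \<longleftrightarrow> (\<forall>u v. (u \<notin> V \<or> v \<notin> V) \<longrightarrow> M u v = 0)
     \<and> matmul V (matmul V L M) L = L
     \<and> matmul V (matmul V M L) M = M
     \<and> transp_mat (matmul V L M) = matmul V L M
     \<and> transp_mat (matmul V M L) = matmul V M L"

definition pinv :: "'a set \<Rightarrow> ('a \<Rightarrow> 'a \<Rightarrow> real) \<Rightarrow> 'a \<Rightarrow> 'a \<Rightarrow> real" where
  "pinv V L = (THE M. is_pinv V L M)"

definition eff_res :: "'a set \<Rightarrow> ('a \<Rightarrow> 'a \<Rightarrow> real) \<Rightarrow> 'a \<Rightarrow> 'a \<Rightarrow> real" where
  "eff_res V A s t =
     (let b = (\<lambda>u. (if u = s then 1 else 0) - (if u = t then 1 else 0) :: real)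
      in \<Sum>u\<in>V. \<Sum>v\<in>V. b u * pinv V (lap V A) u v * b v)"

definition is_eigvec :: "'a set \<Rightarrow> ('a \<Rightarrow> 'a \<Rightarrow> real) \<Rightarrow> real \<Rightarrow> ('a \<Rightarrow> real) \<Rightarrow> bool" where
  "is_eigvec V M lam f \<longleftrightarrow> (\<exists>v\<in>V. f v \<noteq> 0) \<and> (\<forall>u\<in>V. (\<Sum>v\<in>V. M u v * f v) = lam * f u)"

text \<open>The second smallest eigenvalue (with multiplicity) of the symmetric matrix M on V is
  at least gamma: the eigenvectors with eigenvalue below gamma span a space of dimension
  at most one.\<close>
definition second_eig_ge :: "'a set \<Rightarrow> ('a \<Rightarrow> 'a \<Rightarrow> real) \<Rightarrow> real \<Rightarrow> bool" where
  "second_eig_ge V M gam \<longleftrightarrow> (\<forall>lam mu f g. is_eigvec V M lam f \<and> is_eigvec V M mu g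
       \<and> lam < gam \<and> mu < gam \<longrightarrow> (\<exists>c. \<forall>u\<in>V. g u = c * f u))"

definition edge_adj :: "('a \<Rightarrow> 'a \<Rightarrow> bool) \<Rightarrow> 'a \<Rightarrow> 'a \<Rightarrow> real" where
  "edge_adj E u v = (if E u v then 1 else 0)"

definition constr_adj :: "'a set \<Rightarrow> 'a set \<Rightarrow> ('a \<Rightarrow> 'a \<Rightarrow> bool) \<Rightarrow> 'a set \<Rightarrow> 'a set
    \<Rightarrow> 'a \<Rightarrow> 'a \<Rightarrow> 'a \<Rightarrow> 'a \<Rightarrow> real" where
  "constr_adj S1 S2 E1 N1 N2 s t u v =
     (if (u \<in> S1 \<and> v \<in> S1 \<and> E1 u v)
         \<or> (u = s \<and> v \<in> N1 \<union> N2) \<or> (v = s \<and> u \<in> N1 \<union> N2)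
         \<or> (u = t \<and> v \<in> S1 \<union> S2) \<or> (v = t \<and> u \<in> S1 \<union> S2) then 1 else 0)"

end

theory Submission
  imports Defs "HOL-Analysis.Analysis"
begin

text \<open>Effective resistances are read off potentials: if \<open>L \<phi> = e\<^sub>s - e\<^sub>t\<close>, then
  \<open>(e\<^sub>s - e\<^sub>t)\<^sup>T L\<^sup>+ (e\<^sub>s - e\<^sub>t) = \<phi> s - \<phi> t\<close>. On a connected graph such potentials exist
  (they minimize the Dirichlet energy), and the centered ones are the columns of \<open>L\<^sup>+\<close>.

  On the \<open>S\<^sub>2\<close> side the potential is explicit: \<open>2/k\<close> at \<open>s\<close>, \<open>1/k\<close> on the \<open>k\<close> neighbours of
  \<open>s\<close> and \<open>0\<close> elsewhere. On the \<open>S\<^sub>1\<close> side, normalize \<open>\<phi> t = 0\<close>. The equation at \<open>s\<close> gives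
  \<open>r\<^sub>1 - 1/x = P/x\<close>, where \<open>P\<close> is the total potential on \<open>N\<^sub>1\<close>, and summing \<open>\<phi> \<cdot> L \<phi>\<close> over
  \<open>S\<^sub>1\<close> expresses the expander energy of \<open>\<phi>\<close> as \<open>\<phi>(s) P\<close> minus the sums of \<open>\<phi>\<^sup>2\<close> over
  \<open>N\<^sub>1\<close> and over \<open>S\<^sub>1\<close>. The spectral gap bounds this energy below by \<open>\<gamma> d\<close> times the
  variance of \<open>\<phi>\<close> on \<open>S\<^sub>1\<close> (a Poincare inequality); together with Cauchy-Schwarz on \<open>N\<^sub>1\<close>
  this forces \<open>P \<le> 2x/n + 2/(\<gamma> d)\<close>. The hypotheses \<open>n \<ge> 2d\<^sup>3\<close> and \<open>d \<ge> d\<^sub>s ln n\<close> turn this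
  into both error bounds, with \<open>C = 4 + 4/\<gamma>\<close>.\<close>

section \<open>Matrices and the Moore-Penrose pseudoinverse\<close>

lemma matmul_assoc:
  assumes "finite V"
  shows "matmul V (matmul V A B) C = matmul V A (matmul V B C)"
proof (intro ext)
  fix u w
  have "matmul V (matmul V A B) C u w = (\<Sum>v\<in>V. \<Sum>z\<in>V. A u z * B z v * C v w)"
    by (simp add: matmul_def sum_distrib_right)
  also have "\<dots> = (\<Sum>z\<in>V. \<Sum>v\<in>V. A u z * B z v * C v w)"
    by (rule sum.swap)
  also have "\<dots> = matmul V A (matmul V B C) u w"
    by (simp add: matmul_def sum_distrib_left mult.assoc)
  finally show "matmul V (matmul V A B) C u w = matmul V A (matmul V B C) u w" .
qed

lemma transp_mat_matmul: "transp_mat (matmul V A B) = matmul V (transp_mat B) (transp_mat A)"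
  by (intro ext) (simp add: matmul_def transp_mat_def mult.commute)

lemma is_pinv_unique:
  assumes V: "finite V" and 1: "is_pinv V L M1" and 2: "is_pinv V L M2"
  shows "M1 = M2"
proof -
  note assoc = matmul_assoc[OF V]
  let ?m = "matmul V" and ?T = transp_mat
  from 1 have p1: "?m (?m L M1) L = L" "?m (?m M1 L) M1 = M1" "?T (?m L M1) = ?m L M1" "?T (?m M1 L) = ?m M1 L"
    unfolding is_pinv_def by auto
  from 2 have p2: "?m (?m L M2) L = L" "?m (?m M2 L) M2 = M2" "?T (?m L M2) = ?m L M2" "?T (?m M2 L) = ?m M2 L"
    unfolding is_pinv_def by auto
  have TL1: "?T L = ?m (?m (?T L) (?T M1)) (?T L)" and TL2: "?T L = ?m (?m (?T L) (?T M2)) (?T L)"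
    by (metis p1(1) transp_mat_matmul assoc) (metis p2(1) transp_mat_matmul assoc)
  have "M1 = ?m M1 (?T (?m L M1))"
    using p1(2,3) assoc by simp
  also have "\<dots> = ?m (?m M1 (?T M1)) (?m (?m (?T L) (?T M2)) (?T L))"
    by (subst TL2[symmetric]) (simp add: transp_mat_matmul assoc)
  also have "\<dots> = ?m M1 (?m (?T (?m L M1)) (?T (?m L M2)))"
    by (simp add: transp_mat_matmul assoc)
  also have "\<dots> = ?m (?m (?m M1 L) M1) (?m L M2)"
    using p1(3) p2(3) by (simp add: assoc)
  also have "\<dots> = ?m M1 (?m L M2)"
    using p1(2) by simp
  finally have M1: "M1 = ?m (?m M1 L) M2"
    by (simp add: assoc)
  have "M2 = ?m (?T (?m M2 L)) M2"
    using p2(2,4) by simp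
  also have "\<dots> = ?m (?m (?m (?T L) (?T M1)) (?T L)) (?m (?T M2) M2)"
    by (subst TL1[symmetric]) (simp add: transp_mat_matmul assoc)
  also have "\<dots> = ?m (?m (?T (?m M1 L)) (?T (?m M2 L))) M2"
    by (simp add: transp_mat_matmul assoc)
  also have "\<dots> = ?m (?m M1 L) M2"
    using p1(4) p2(2,4) by (simp add: assoc)
  finally show ?thesis
    using M1 by simp
qed

lemma pinv_eqI:
  assumes "finite V" "is_pinv V L M"
  shows "pinv V L = M"
  unfolding pinv_def using assms is_pinv_unique by blast

lemma is_pinvI_symmetric:
  assumes V: "finite V" and M0: "\<forall>u v. u \<notin> V \<or> v \<notin> V \<longrightarrow> M u v = 0"
    and symm: "transp_mat L = L" "transp_mat M = M" "transp_mat P = P"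
    and LM: "matmul V L M = P" and PL: "matmul V P L = L" and PM: "matmul V P M = M"
  shows "is_pinv V L M"
proof -
  have "matmul V M L = P"
    by (metis LM symm transp_mat_matmul)
  then show ?thesis
    unfolding is_pinv_def using M0 LM PL PM symm(3) by simp
qed

section \<open>The Laplacian and its quadratic form\<close>

definition lap_apply :: "'a set \<Rightarrow> ('a \<Rightarrow> 'a \<Rightarrow> real) \<Rightarrow> ('a \<Rightarrow> real) \<Rightarrow> 'a \<Rightarrow> real" where
  "lap_apply V A f u = (\<Sum>v\<in>V. lap V A u v * f v)"

definition energy :: "'a set \<Rightarrow> ('a \<Rightarrow> 'a \<Rightarrow> real) \<Rightarrow> ('a \<Rightarrow> real) \<Rightarrow> real" where
  "energy V A f = (\<Sum>u\<in>V. f u * lap_apply V A f u)"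

definition graph_connected :: "'a set \<Rightarrow> ('a \<Rightarrow> 'a \<Rightarrow> real) \<Rightarrow> bool" where
  "graph_connected V A \<longleftrightarrow> (\<forall>\<phi> :: 'a \<Rightarrow> real.
     (\<forall>u\<in>V. \<forall>v\<in>V. A u v \<noteq> 0 \<longrightarrow> \<phi> u = \<phi> v) \<longrightarrow> (\<forall>u\<in>V. \<forall>v\<in>V. \<phi> u = \<phi> v))"

lemma lap_symmetric: "(\<And>u v. A u v = A v u) \<Longrightarrow> lap V A u v = lap V A v u"
  unfolding lap_def by auto

lemma lap_apply_eq:
  assumes "finite V" "u \<in> V"
  shows "lap_apply V A f u = deg V A u * f u - (\<Sum>v\<in>V. A u v * f v)"
proof -
  have "lap_apply V A f u = (\<Sum>v\<in>V. (if u = v then deg V A u * f v else 0) - A u v * f v)"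
    unfolding lap_apply_def lap_def using assms(2) by (intro sum.cong) (auto simp: algebra_simps)
  also have "\<dots> = deg V A u * f u - (\<Sum>v\<in>V. A u v * f v)"
    using assms by (simp add: sum_subtractf)
  finally show ?thesis .
qed

lemma lap_apply_eq_sum_diff:
  assumes "finite V" "u \<in> V"
  shows "lap_apply V A \<phi> u = (\<Sum>v\<in>V. A u v * (\<phi> u - \<phi> v))"
  using assms by (simp add: lap_apply_eq deg_def right_diff_distrib sum_subtractf sum_distrib_left sum_distrib_right)

lemma lap_apply_cong: "(\<And>v. v \<in> V \<Longrightarrow> f v = g v) \<Longrightarrow> lap_apply V A f u = lap_apply V A g u"
  unfolding lap_apply_def by simp

lemma lap_apply_linear:
  "lap_apply V A (\<lambda>v. a * f v + b * g v) u = a * lap_apply V A f u + b * lap_apply V A g u"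
  unfolding lap_apply_def by (simp add: algebra_simps sum.distrib sum_distrib_left)

lemma lap_apply_const: "finite V \<Longrightarrow> lap_apply V A (\<lambda>_. c) u = 0"
  by (cases "u \<in> V") (simp_all add: lap_apply_eq deg_def sum_distrib_left mult.commute,
      simp add: lap_apply_def lap_def)

lemma lap_apply_add_const: "finite V \<Longrightarrow> lap_apply V A (\<lambda>v. f v + c) u = lap_apply V A f u"
  using lap_apply_linear[of V A 1 f 1 "\<lambda>_. c" u] lap_apply_const[of V A c u] by simp

lemma sum_mult_lap_apply_commute:
  assumes "finite V" "\<And>u v. A u v = A v u"
  shows "(\<Sum>u\<in>V. g u * lap_apply V A f u) = (\<Sum>u\<in>V. f u * lap_apply V A g u)"
proof -
  have "(\<Sum>u\<in>V. g u * lap_apply V A f u) = (\<Sum>u\<in>V. \<Sum>v\<in>V. g u * lap V A u v * f v)"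
    unfolding lap_apply_def by (simp add: sum_distrib_left mult.assoc)
  also have "\<dots> = (\<Sum>v\<in>V. \<Sum>u\<in>V. g u * lap V A u v * f v)"
    by (rule sum.swap)
  also have "\<dots> = (\<Sum>v\<in>V. f v * lap_apply V A g v)"
    unfolding lap_apply_def sum_distrib_left
    by (intro sum.cong refl) (simp add: lap_symmetric[of A, OF assms(2)] mult.commute mult.left_commute)
  finally show ?thesis .
qed

lemma sum_lap_apply_eq_0:
  assumes "finite V" "\<And>u v. A u v = A v u"
  shows "(\<Sum>u\<in>V. lap_apply V A f u) = 0"
  using sum_mult_lap_apply_commute[OF assms, where g="\<lambda>_. 1" and f=f] lap_apply_const[OF assms(1)] by simp

lemma energy_eq_edge_sum:
  assumes "finite V" "\<And>u v. A u v = A v u"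
  shows "energy V A f = (\<Sum>u\<in>V. \<Sum>v\<in>V. A u v * (f u - f v)\<^sup>2) / 2"
proof -
  have "energy V A f = (\<Sum>u\<in>V. \<Sum>v\<in>V. A u v * (f u)\<^sup>2) - (\<Sum>u\<in>V. \<Sum>v\<in>V. A u v * f u * f v)"
    using assms(1) by (simp add: energy_def lap_apply_eq deg_def algebra_simps power2_eq_square
        sum_distrib_left sum_distrib_right sum_subtractf)
  moreover have "(\<Sum>u\<in>V. \<Sum>v\<in>V. A u v * (f v)\<^sup>2) = (\<Sum>u\<in>V. \<Sum>v\<in>V. A u v * (f u)\<^sup>2)"
    by (subst sum.swap) (simp add: assms(2))
  moreover have "(\<Sum>u\<in>V. \<Sum>v\<in>V. A u v * (f u - f v)\<^sup>2) = (\<Sum>u\<in>V. \<Sum>v\<in>V. A u v * (f u)\<^sup>2)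
      + (\<Sum>u\<in>V. \<Sum>v\<in>V. A u v * (f v)\<^sup>2) - 2 * (\<Sum>u\<in>V. \<Sum>v\<in>V. A u v * f u * f v)"
    by (simp add: power2_diff algebra_simps sum.distrib sum_subtractf sum_distrib_left)
  ultimately show ?thesis
    by simp
qed

lemma energy_nonneg:
  assumes "finite V" "\<And>u v. A u v = A v u" "\<And>u v. A u v \<ge> 0"
  shows "energy V A f \<ge> 0"
  unfolding energy_eq_edge_sum[OF assms(1,2)] using assms(3)
  by (intro divide_nonneg_pos sum_nonneg mult_nonneg_nonneg) auto

lemma energy_eq_0_imp_const_on_edges:
  assumes "finite V" "\<And>u v. A u v = A v u" "\<And>u v. A u v \<ge> 0"
    and "energy V A f = 0" "u \<in> V" "v \<in> V" "A u v \<noteq> 0"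
  shows "f u = f v"
proof -
  have nonneg: "0 \<le> A u v * (f u - f v)\<^sup>2" for u v
    using assms(3) by simp
  have "(\<Sum>u\<in>V. \<Sum>v\<in>V. A u v * (f u - f v)\<^sup>2) = 0"
    using assms(4) energy_eq_edge_sum[OF assms(1,2)] by simp
  then have "(\<Sum>v\<in>V. A u v * (f u - f v)\<^sup>2) = 0"
    using assms(1,5) by (subst (asm) sum_nonneg_eq_0_iff) (auto intro: sum_nonneg nonneg)
  then have "A u v * (f u - f v)\<^sup>2 = 0"
    using assms(1,6) by (subst (asm) sum_nonneg_eq_0_iff) (auto intro: nonneg)
  then show ?thesis
    using assms(7) by simp
qed

lemma energy_add_scaled:
  assumes "finite V" "\<And>u v. A u v = A v u"
  shows "energy V A (\<lambda>v. f v + e * g v)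
    = energy V A f + 2 * e * (\<Sum>u\<in>V. g u * lap_apply V A f u) + e\<^sup>2 * energy V A g"
proof -
  have "lap_apply V A (\<lambda>v. f v + e * g v) u = lap_apply V A f u + e * lap_apply V A g u" for u
    using lap_apply_linear[of V A 1 f e g u] by simp
  then have "energy V A (\<lambda>v. f v + e * g v) = energy V A f + e * (\<Sum>u\<in>V. f u * lap_apply V A g u)
      + e * (\<Sum>u\<in>V. g u * lap_apply V A f u) + e\<^sup>2 * energy V A g"
    unfolding energy_def
    by (simp add: algebra_simps power2_eq_square sum.distrib sum_distrib_left)
  then show ?thesis
    using sum_mult_lap_apply_commute[OF assms, where g=f and f=g] by simp
qed

lemma energy_scaled: "energy V A (\<lambda>v. e * g v) = e\<^sup>2 * energy V A g"
  unfolding energy_def using lap_apply_linear[of V A e g 0 g]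
  by (simp add: sum_distrib_left power2_eq_square algebra_simps)

lemma energy_add_const:
  assumes "finite V" "\<And>u v. A u v = A v u"
  shows "energy V A (\<lambda>v. f v + c) = energy V A f"
proof -
  have "energy V A (\<lambda>v. f v + c) = energy V A f + c * (\<Sum>u\<in>V. lap_apply V A f u)"
    unfolding energy_def lap_apply_add_const[OF assms(1)]
    by (simp add: algebra_simps sum.distrib sum_distrib_left)
  then show ?thesis
    using sum_lap_apply_eq_0[OF assms] by simp
qed

lemma energy_cong: "(\<And>u. u \<in> V \<Longrightarrow> f u = g u) \<Longrightarrow> energy V A f = energy V A g"
  unfolding energy_def using lap_apply_cong[of V f g] by (intro sum.cong) auto

lemma continuous_on_energy: "continuous_on UNIV (energy V A)"
  unfolding energy_def lap_apply_def
  by (intro continuous_intros continuous_on_product_coordinates)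

section \<open>Solving Laplacian systems by energy minimization\<close>

definition cube_on :: "'a set \<Rightarrow> real \<Rightarrow> ('a \<Rightarrow> real) set" where
  "cube_on W B = {f. (\<forall>i. i \<notin> W \<longrightarrow> f i = 0) \<and> (\<forall>i. \<bar>f i\<bar> \<le> B)}"

lemma compact_cube_on: "compact (cube_on W B)"
proof -
  define S where "S = (\<lambda>i. if i \<in> W then cball (0::real) B else cball 0 B \<inter> {0})"
  have "cube_on W B = PiE UNIV S"
    unfolding cube_on_def S_def PiE_def Pi_def extensional_def by (auto simp: dist_real_def)
  moreover have "compactin (product_topology (\<lambda>i. euclidean) UNIV) (PiE UNIV S)"
    unfolding compactin_PiE by (auto simp: S_def compact_Int_closed intro!: disjI2)
  ultimately show ?thesis
    unfolding euclidean_product_topology compactin_euclidean_iff by simp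
qed

lemma cube_on_attains_inf:
  fixes F :: "('a \<Rightarrow> real) \<Rightarrow> real"
  assumes "closed K" "continuous_on UNIV F" "f0 \<in> cube_on W B \<inter> K"
  obtains f where "f \<in> cube_on W B \<inter> K" "\<And>g. g \<in> cube_on W B \<inter> K \<Longrightarrow> F f \<le> F g"
proof -
  have "compact (cube_on W B \<inter> K)"
    using compact_cube_on assms(1) by (rule compact_Int_closed)
  then show ?thesis
    using continuous_attains_inf[of "cube_on W B \<inter> K" F] assms that
    by (metis continuous_on_subset empty_iff subset_UNIV)
qed

lemma normalized_in_unit_cube:
  assumes V: "finite V" and "W \<subseteq> V" and g: "\<forall>i. i \<notin> W \<longrightarrow> g i = 0"
    and pos: "(\<Sum>u\<in>V. (g u)\<^sup>2) > 0"
  defines "h \<equiv> \<lambda>v. (1 / sqrt (\<Sum>u\<in>V. (g u)\<^sup>2)) * g v"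
  shows "h \<in> cube_on W 1" "(\<Sum>u\<in>V. (h u)\<^sup>2) = 1"
proof -
  have "\<bar>h i\<bar> \<le> 1" for i
  proof (cases "i \<in> V")
    case True
    then have "(g i)\<^sup>2 \<le> (\<Sum>u\<in>V. (g u)\<^sup>2)"
      using V by (intro member_le_sum) auto
    then have "\<bar>g i\<bar> \<le> sqrt (\<Sum>u\<in>V. (g u)\<^sup>2)"
      using real_le_rsqrt by (simp add: real_sqrt_abs[symmetric] del: real_sqrt_abs)
    then show ?thesis
      unfolding h_def using pos by (simp add: abs_mult divide_le_eq_1)
  qed (use assms in \<open>auto simp: h_def\<close>)
  then show "h \<in> cube_on W 1"
    using g unfolding cube_on_def h_def by auto
  show "(\<Sum>u\<in>V. (h u)\<^sup>2) = 1"
    unfolding h_def using pos by (simp add: power_mult_distrib power_divide sum_divide_distrib[symmetric])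
qed

lemma energy_rayleigh_minimizer:
  assumes V: "finite V" and WV: "W \<subseteq> V" and K: "closed K" and cone: "\<And>g c. g \<in> K \<Longrightarrow> (\<lambda>v. c * g v) \<in> K"
    and g0: "g0 \<in> K" "\<forall>i. i \<notin> W \<longrightarrow> g0 i = 0" "(\<Sum>u\<in>V. (g0 u)\<^sup>2) > 0"
  obtains f where "f \<in> K" "\<forall>i. i \<notin> W \<longrightarrow> f i = 0" "(\<Sum>u\<in>V. (f u)\<^sup>2) = 1"
    "\<And>g. g \<in> K \<Longrightarrow> \<forall>i. i \<notin> W \<longrightarrow> g i = 0 \<Longrightarrow> energy V A f * (\<Sum>u\<in>V. (g u)\<^sup>2) \<le> energy V A g"
proof -
  define Sph where "Sph = {f :: 'a \<Rightarrow> real. (\<Sum>u\<in>V. (f u)\<^sup>2) = 1}"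
  have "closed (K \<inter> Sph)"
    unfolding Sph_def using K
    by (intro closed_Int closed_Collect_eq continuous_intros continuous_on_product_coordinates)
  moreover have "(\<lambda>v. (1 / sqrt (\<Sum>u\<in>V. (g0 u)\<^sup>2)) * g0 v) \<in> cube_on W 1 \<inter> (K \<inter> Sph)"
    using normalized_in_unit_cube[OF V WV g0(2,3)] cone[OF g0(1)] unfolding Sph_def by blast
  ultimately obtain f where f: "f \<in> cube_on W 1 \<inter> (K \<inter> Sph)"
    and min: "\<And>g. g \<in> cube_on W 1 \<inter> (K \<inter> Sph) \<Longrightarrow> energy V A f \<le> energy V A g"
    using cube_on_attains_inf[OF _ continuous_on_energy] by blast
  have "energy V A f * (\<Sum>u\<in>V. (g u)\<^sup>2) \<le> energy V A g"
    if g: "g \<in> K" "\<forall>i. i \<notin> W \<longrightarrow> g i = 0" for g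
  proof (cases "(\<Sum>u\<in>V. (g u)\<^sup>2) > 0")
    case True
    let ?c = "1 / sqrt (\<Sum>u\<in>V. (g u)\<^sup>2)"
    have "(\<lambda>v. ?c * g v) \<in> cube_on W 1 \<inter> (K \<inter> Sph)"
      using normalized_in_unit_cube[OF V WV g(2) True] cone[OF g(1)] unfolding Sph_def by blast
    then have "energy V A f \<le> ?c\<^sup>2 * energy V A g"
      using min energy_scaled by metis
    then show ?thesis
      using True by (simp add: power_divide le_divide_eq)
  next
    case False
    then have "(\<Sum>u\<in>V. (g u)\<^sup>2) = 0"
      by (simp add: order.antisym sum_nonneg)
    then have "\<forall>u\<in>V. g u = 0"
      using V by (simp add: sum_nonneg_eq_0_iff)
    then show ?thesis
      by (simp add: energy_def)
  qed
  with f show thesis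
    using that unfolding cube_on_def Sph_def by blast
qed

lemma energy_coercive:
  assumes V: "finite V" and t: "t \<in> V" and sym: "\<And>u v. A u v = A v u" and nonneg: "\<And>u v. A u v \<ge> 0"
    and conn: "graph_connected V A"
  obtains \<mu> where "\<mu> > 0" "\<And>g. \<forall>i. i \<notin> V - {t} \<longrightarrow> g i = 0 \<Longrightarrow> \<mu> * (\<Sum>u\<in>V. (g u)\<^sup>2) \<le> energy V A g"
proof (cases "V - {t} = {}")
  case True
  have "1 * (\<Sum>u\<in>V. (g u)\<^sup>2) \<le> energy V A g" if "\<forall>i. i \<notin> V - {t} \<longrightarrow> g i = 0" for g
    using that True energy_nonneg[of V A, OF V sym nonneg] by simp
  then show thesis
    using that[of 1] by simp
next
  case False
  then obtain w where w: "w \<in> V - {t}"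
    by auto
  have "(\<Sum>u\<in>V. (of_bool (u = w))\<^sup>2) = (1::real)"
    using w V by (simp add: power2_eq_square)
  then obtain f where f: "\<forall>i. i \<notin> V - {t} \<longrightarrow> f i = 0" "(\<Sum>u\<in>V. (f u)\<^sup>2) = 1"
    and ray: "\<And>g. \<forall>i. i \<notin> V - {t} \<longrightarrow> g i = 0 \<Longrightarrow> energy V A f * (\<Sum>u\<in>V. (g u)\<^sup>2) \<le> energy V A g"
    using energy_rayleigh_minimizer[of V "V - {t}" UNIV "\<lambda>u. of_bool (u = w)"] V w by auto
  have "energy V A f \<noteq> 0"
  proof
    assume "energy V A f = 0"
    then have "\<forall>u\<in>V. \<forall>v\<in>V. A u v \<noteq> 0 \<longrightarrow> f u = f v"
      using energy_eq_0_imp_const_on_edges[of V A, OF V sym nonneg] by blast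
    then have "\<forall>u\<in>V. f u = f t"
      using conn t unfolding graph_connected_def by blast
    then show False
      using f by simp
  qed
  then have "energy V A f > 0"
    using energy_nonneg[of V A, OF V sym nonneg, of f] by simp
  then show thesis
    using that[of "energy V A f"] ray by (simp add: mult.commute)
qed

lemma quadratic_nonneg_imp_linear_coeff_0:
  fixes a b :: real
  assumes "\<And>e. 0 \<le> a * e\<^sup>2 + b * e"
  shows "b = 0"
proof (rule ccontr)
  assume b: "b \<noteq> 0"
  define k where "k = \<bar>a\<bar> + 1"
  have k: "k > 0" "a - k < 0"
    unfolding k_def by auto
  have "a * (- b / k)\<^sup>2 + b * (- b / k) = b\<^sup>2 * (a - k) / k\<^sup>2"
    using k by (simp add: field_simps power2_eq_square)
  also have "\<dots> < 0"
    using b k by (intro divide_neg_pos mult_pos_neg) auto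
  finally show False
    using assms[of "- b / k"] by simp
qed

lemma dirichlet_functional_lower_bound:
  fixes c g :: "'a \<Rightarrow> real"
  assumes \<mu>: "\<mu> > 0" and coercive: "\<mu> * (\<Sum>u\<in>V. (g u)\<^sup>2) \<le> energy V A g"
  shows "(\<mu> / 2) * (\<Sum>u\<in>V. (g u)\<^sup>2) - (2 / \<mu>) * (\<Sum>u\<in>V. (c u)\<^sup>2)
    \<le> energy V A g - 2 * (\<Sum>u\<in>V. c u * g u)"
proof -
  have "2 * (c u * g u) \<le> (\<mu> / 2) * (g u)\<^sup>2 + (2 / \<mu>) * (c u)\<^sup>2" for u
  proof -
    have "(\<mu> / 2) * (g u)\<^sup>2 + (2 / \<mu>) * (c u)\<^sup>2 - 2 * (c u * g u) = (\<mu> * g u - 2 * c u)\<^sup>2 / (2 * \<mu>)"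
      using \<mu> by (simp add: field_simps power2_eq_square)
    then show ?thesis
      using \<mu> by (smt (verit) divide_nonneg_pos zero_le_power2)
  qed
  then have "2 * (\<Sum>u\<in>V. c u * g u) \<le> (\<mu> / 2) * (\<Sum>u\<in>V. (g u)\<^sup>2) + (2 / \<mu>) * (\<Sum>u\<in>V. (c u)\<^sup>2)"
    unfolding sum_distrib_left sum.distrib[symmetric] by (intro sum_mono)
  then show ?thesis
    using coercive by simp
qed

text \<open>Outside a large cube the functional exceeds its value at \<open>0\<close>, so its minimum over the
  compact cube is global.\<close>
lemma dirichlet_minimizer_exists:
  fixes c :: "'a \<Rightarrow> real"
  assumes V: "finite V" and WV: "W \<subseteq> V" and \<mu>: "\<mu> > 0"
    and coercive: "\<And>g. \<forall>i. i \<notin> W \<longrightarrow> g i = 0 \<Longrightarrow> \<mu> * (\<Sum>u\<in>V. (g u)\<^sup>2) \<le> energy V A g"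
  obtains f where "\<forall>i. i \<notin> W \<longrightarrow> f i = 0"
    "\<And>g. \<forall>i. i \<notin> W \<longrightarrow> g i = 0 \<Longrightarrow>
       energy V A f - 2 * (\<Sum>u\<in>V. c u * f u) \<le> energy V A g - 2 * (\<Sum>u\<in>V. c u * g u)"
proof -
  define J where "J = (\<lambda>f. energy V A f - 2 * (\<Sum>u\<in>V. c u * f u))"
  define K where "K = (\<Sum>u\<in>V. (c u)\<^sup>2)"
  define B where "B = sqrt (4 * K / \<mu>\<^sup>2 + 1)"
  have K: "K \<ge> 0"
    unfolding K_def by (intro sum_nonneg) auto
  have B: "B \<ge> 0" "B\<^sup>2 = 4 * K / \<mu>\<^sup>2 + 1"
    unfolding B_def using K \<mu> by simp_all
  have J_lower: "J g \<ge> (\<mu> / 2) * (\<Sum>u\<in>V. (g u)\<^sup>2) - (2 / \<mu>) * K"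
    if "\<forall>i. i \<notin> W \<longrightarrow> g i = 0" for g
    unfolding J_def K_def by (rule dirichlet_functional_lower_bound[OF \<mu> coercive[OF that]])
  have "closed (UNIV :: ('a \<Rightarrow> real) set)" "continuous_on UNIV J"
    unfolding J_def energy_def lap_apply_def
    by (auto intro!: continuous_intros continuous_on_product_coordinates)
  moreover have zero: "(\<lambda>_. 0) \<in> cube_on W B \<inter> UNIV"
    using B unfolding cube_on_def by auto
  ultimately obtain f where f: "f \<in> cube_on W B" and min: "\<And>g. g \<in> cube_on W B \<Longrightarrow> J f \<le> J g"
    by (rule cube_on_attains_inf) auto
  have "J f \<le> J g" if g: "\<forall>i. i \<notin> W \<longrightarrow> g i = 0" for g
  proof (cases "g \<in> cube_on W B")
    case False
    then obtain i where i: "\<bar>g i\<bar> > B"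
      using g unfolding cube_on_def by (auto simp: not_le)
    then have "i \<in> V"
      using g B WV by (cases "i \<in> W") auto
    have "B\<^sup>2 < (g i)\<^sup>2"
      using i B by (metis abs_le_square_iff abs_of_nonneg linorder_not_le)
    also have "\<dots> \<le> (\<Sum>u\<in>V. (g u)\<^sup>2)"
      using \<open>i \<in> V\<close> V by (intro member_le_sum) auto
    finally have "4 * K / \<mu>\<^sup>2 + 1 \<le> (\<Sum>u\<in>V. (g u)\<^sup>2)"
      using B by simp
    then have "(\<mu> / 2) * (4 * K / \<mu>\<^sup>2 + 1) \<le> (\<mu> / 2) * (\<Sum>u\<in>V. (g u)\<^sup>2)"
      using \<mu> by (intro mult_left_mono) auto
    moreover have "(\<mu> / 2) * (4 * K / \<mu>\<^sup>2 + 1) = (2 / \<mu>) * K + \<mu> / 2"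
      using \<mu> by (simp add: field_simps power2_eq_square)
    moreover have "J f \<le> 0"
      using min[of "\<lambda>_. 0"] zero by (simp add: J_def energy_def)
    ultimately show ?thesis
      using J_lower[OF g] \<mu> by linarith
  qed (use min in simp)
  with f show thesis
    using that unfolding cube_on_def J_def by blast
qed

lemma dirichlet_minimizer_solves:
  fixes c :: "'a \<Rightarrow> real"
  assumes V: "finite V" and sym: "\<And>u v. A u v = A v u" and WV: "W \<subseteq> V" and w: "w \<in> W"
    and f: "\<forall>i. i \<notin> W \<longrightarrow> f i = 0"
    and min: "\<And>g. \<forall>i. i \<notin> W \<longrightarrow> g i = 0 \<Longrightarrow>
       energy V A f - 2 * (\<Sum>u\<in>V. c u * f u) \<le> energy V A g - 2 * (\<Sum>u\<in>V. c u * g u)"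
  shows "lap_apply V A f w = c w"
proof -
  let ?\<delta> = "\<lambda>u. of_bool (u = w) :: real"
  have "w \<in> V"
    using w WV by auto
  have "0 \<le> energy V A ?\<delta> * e\<^sup>2 + 2 * (lap_apply V A f w - c w) * e" for e
  proof -
    have "\<forall>i. i \<notin> W \<longrightarrow> f i + e * ?\<delta> i = 0"
      using f w by auto
    from min[OF this] have "energy V A f - 2 * (\<Sum>u\<in>V. c u * f u)
        \<le> energy V A f + 2 * e * (\<Sum>u\<in>V. ?\<delta> u * lap_apply V A f u) + e\<^sup>2 * energy V A ?\<delta>
           - 2 * (\<Sum>u\<in>V. c u * f u + e * (c u * ?\<delta> u))"
      by (simp only: energy_add_scaled[of V A, OF V sym] distrib_left mult.left_commute)
    moreover have "(\<Sum>u\<in>V. c u * f u + e * (c u * ?\<delta> u)) = (\<Sum>u\<in>V. c u * f u) + e * c w"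
      using \<open>w \<in> V\<close> V by (simp add: sum.distrib sum_distrib_left[symmetric])
    moreover have "(\<Sum>u\<in>V. ?\<delta> u * lap_apply V A f u) = lap_apply V A f w"
      using \<open>w \<in> V\<close> V by simp
    ultimately show ?thesis
      by (simp add: algebra_simps)
  qed
  from quadratic_nonneg_imp_linear_coeff_0[OF this] show ?thesis
    by simp
qed

lemma lap_solvable:
  fixes c :: "'a \<Rightarrow> real"
  assumes V: "finite V" and t: "t \<in> V" and sym: "\<And>u v. A u v = A v u" and nonneg: "\<And>u v. A u v \<ge> 0"
    and conn: "graph_connected V A" and c: "(\<Sum>u\<in>V. c u) = 0"
  obtains \<phi> where "\<phi> t = 0" "\<forall>u\<in>V. lap_apply V A \<phi> u = c u"
proof -
  obtain \<mu> where \<mu>: "\<mu> > 0"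
    and coercive: "\<And>g. \<forall>i. i \<notin> V - {t} \<longrightarrow> g i = 0 \<Longrightarrow> \<mu> * (\<Sum>u\<in>V. (g u)\<^sup>2) \<le> energy V A g"
    using energy_coercive[OF V t sym nonneg conn] by blast
  obtain \<phi> where \<phi>: "\<forall>i. i \<notin> V - {t} \<longrightarrow> \<phi> i = 0"
    and min: "\<And>g. \<forall>i. i \<notin> V - {t} \<longrightarrow> g i = 0 \<Longrightarrow>
       energy V A \<phi> - 2 * (\<Sum>u\<in>V. c u * \<phi> u) \<le> energy V A g - 2 * (\<Sum>u\<in>V. c u * g u)"
    using dirichlet_minimizer_exists[OF V Diff_subset \<mu> coercive] by blast
  have sol: "lap_apply V A \<phi> w = c w" if "w \<in> V - {t}" for w
    by (rule dirichlet_minimizer_solves[OF V sym Diff_subset that \<phi> min])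
  \<comment> \<open>At \<open>t\<close> the equation holds because both sides sum to zero over \<open>V\<close>.\<close>
  have "lap_apply V A \<phi> t + (\<Sum>u\<in>V - {t}. lap_apply V A \<phi> u) = c t + (\<Sum>u\<in>V - {t}. c u)"
    using sum_lap_apply_eq_0[of V A, OF V sym] c V t by (simp add: sum.remove)
  with sol have "\<forall>u\<in>V. lap_apply V A \<phi> u = c u"
    by auto
  moreover have "\<phi> t = 0"
    using \<phi> by simp
  ultimately show thesis
    using that by blast
qed

section \<open>Pseudoinverse of the Laplacian and effective resistance\<close>

lemma sum_matmul_right:
  assumes "finite V"
  shows "(\<Sum>v\<in>V. Q z v * (\<Sum>y\<in>V. R v y * g y)) = (\<Sum>y\<in>V. matmul V Q R z y * g y)"
proof -
  have "(\<Sum>v\<in>V. Q z v * (\<Sum>y\<in>V. R v y * g y)) = (\<Sum>v\<in>V. \<Sum>y\<in>V. Q z v * R v y * g y)"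
    by (simp add: sum_distrib_left mult.assoc)
  also have "\<dots> = (\<Sum>y\<in>V. \<Sum>v\<in>V. Q z v * R v y * g y)"
    by (rule sum.swap)
  finally show ?thesis
    by (simp add: matmul_def sum_distrib_right)
qed

lemma sum_matmul_left:
  fixes f h :: "'a \<Rightarrow> real"
  shows "(\<Sum>u\<in>V. (\<Sum>z\<in>V. f z * Q z u) * h u) = (\<Sum>z\<in>V. f z * (\<Sum>u\<in>V. Q z u * h u))"
proof -
  have "(\<Sum>u\<in>V. (\<Sum>z\<in>V. f z * Q z u) * h u) = (\<Sum>u\<in>V. \<Sum>z\<in>V. f z * Q z u * h u)"
    unfolding sum_distrib_right ..
  also have "\<dots> = (\<Sum>z\<in>V. \<Sum>u\<in>V. f z * Q z u * h u)"
    by (rule sum.swap)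
  finally show ?thesis
    by (simp add: sum_distrib_left mult.assoc)
qed

definition center_proj :: "'a set \<Rightarrow> 'a \<Rightarrow> 'a \<Rightarrow> real" where
  "center_proj V u w = (if u \<in> V \<and> w \<in> V then of_bool (u = w) - 1 / real (card V) else 0)"

lemma center_proj_symmetric: "center_proj V u w = center_proj V w u"
  unfolding center_proj_def by auto

lemma sum_center_proj_mult:
  assumes "finite V" "u \<in> V"
  shows "(\<Sum>v\<in>V. center_proj V u v * f v) = f u - (\<Sum>v\<in>V. f v) / real (card V)"
  using assms by (simp add: center_proj_def left_diff_distrib sum_subtractf sum_divide_distrib)

lemma sum_center_proj: "finite V \<Longrightarrow> (\<Sum>u\<in>V. center_proj V u w) = 0"
  by (cases "w \<in> V") (auto simp: center_proj_def sum_subtractf)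

lemma centered_lap_solvable:
  fixes c :: "'a \<Rightarrow> real"
  assumes V: "finite V" and t: "t \<in> V" and sym: "\<And>u v. A u v = A v u" and nonneg: "\<And>u v. A u v \<ge> 0"
    and conn: "graph_connected V A" and c: "(\<Sum>u\<in>V. c u) = 0"
  shows "\<exists>\<psi>. (\<Sum>u\<in>V. \<psi> u) = 0 \<and> (\<forall>u\<in>V. lap_apply V A \<psi> u = c u)"
proof -
  obtain \<phi> where \<phi>: "\<forall>u\<in>V. lap_apply V A \<phi> u = c u"
    using lap_solvable[OF V t sym nonneg conn c] by blast
  define m where "m = (\<Sum>v\<in>V. \<phi> v) / real (card V)"
  let ?\<psi> = "\<lambda>u. \<phi> u - m"
  have "card V > 0"
    using V t card_gt_0_iff by blast
  then have "(\<Sum>u\<in>V. ?\<psi> u) = 0"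
    by (simp add: sum_subtractf m_def)
  moreover have "lap_apply V A ?\<psi> u = lap_apply V A \<phi> u" for u
    using lap_apply_add_const[OF V, of A \<phi> "- m"] by simp
  then have "\<forall>u\<in>V. lap_apply V A ?\<psi> u = c u"
    using \<phi> by simp
  ultimately show ?thesis
    by blast
qed

text \<open>The columns of the pseudoinverse are the centered potentials \<open>\<psi>\<^sub>w\<close> with
  \<open>L \<psi>\<^sub>w = e\<^sub>w - 1/n\<close>; they are symmetric because \<open>L\<close> is self-adjoint.\<close>
lemma centered_potentials_symmetric:
  assumes V: "finite V" and sym: "\<And>u v. A u v = A v u" and uw: "u \<in> V" "w \<in> V"
    and \<psi>: "\<And>w. w \<in> V \<Longrightarrow> (\<Sum>v\<in>V. \<psi> w v) = 0 \<and> (\<forall>v\<in>V. lap_apply V A (\<psi> w) v = center_proj V v w)"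
  shows "\<psi> w u = \<psi> u w"
proof -
  have "\<psi> w u = (\<Sum>v\<in>V. center_proj V u v * \<psi> w v)"
    using sum_center_proj_mult[OF V uw(1)] \<psi>[OF uw(2)] by simp
  also have "\<dots> = (\<Sum>v\<in>V. \<psi> w v * lap_apply V A (\<psi> u) v)"
    using \<psi>[OF uw(1)] by (intro sum.cong) (auto simp: center_proj_symmetric)
  also have "\<dots> = (\<Sum>v\<in>V. \<psi> u v * lap_apply V A (\<psi> w) v)"
    by (rule sum_mult_lap_apply_commute[of V A, OF V sym])
  also have "\<dots> = (\<Sum>v\<in>V. center_proj V w v * \<psi> u v)"
    using \<psi>[OF uw(2)] by (intro sum.cong) (auto simp: center_proj_symmetric)
  also have "\<dots> = \<psi> u w"
    using sum_center_proj_mult[OF V uw(2)] \<psi>[OF uw(1)] by simp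
  finally show ?thesis .
qed

lemma is_pinv_pinv_lap:
  assumes V: "finite V" and t: "t \<in> V" and sym: "\<And>u v. A u v = A v u" and nonneg: "\<And>u v. A u v \<ge> 0"
    and conn: "graph_connected V A"
  shows "is_pinv V (lap V A) (pinv V (lap V A))"
proof -
  let ?L = "lap V A" and ?P = "center_proj V"
  have "\<forall>w\<in>V. \<exists>\<psi>. (\<Sum>v\<in>V. \<psi> v) = 0 \<and> (\<forall>v\<in>V. lap_apply V A \<psi> v = ?P v w)"
    using centered_lap_solvable[OF V t sym nonneg conn] sum_center_proj[OF V] by blast
  then obtain \<psi> where \<psi>: "\<And>w. w \<in> V \<Longrightarrow> (\<Sum>v\<in>V. \<psi> w v) = 0 \<and> (\<forall>v\<in>V. lap_apply V A (\<psi> w) v = ?P v w)"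
    by metis
  define M where "M = (\<lambda>u w. if u \<in> V \<and> w \<in> V then \<psi> w u else 0)"
  have "transp_mat ?L = ?L" "transp_mat ?P = ?P" "transp_mat M = M"
    using lap_symmetric[of A, OF sym] center_proj_symmetric
      centered_potentials_symmetric[of V A, OF V sym _ _ \<psi>]
    unfolding transp_mat_def M_def by (auto intro!: ext)
  moreover have "matmul V ?L M = ?P"
  proof (intro ext)
    fix u w
    show "matmul V ?L M u w = ?P u w"
      using \<psi>[of w] unfolding matmul_def M_def lap_apply_def
      by (cases "u \<in> V \<and> w \<in> V") (auto simp: lap_def center_proj_def)
  qed
  moreover have "matmul V ?P ?L = ?L"
  proof (intro ext)
    fix u w
    have "(\<Sum>v\<in>V. ?L v w) = lap_apply V A (\<lambda>_. 1) w"
      unfolding lap_apply_def by (simp add: lap_symmetric[of A, OF sym])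
    then show "matmul V ?P ?L u w = ?L u w"
      using sum_center_proj_mult[OF V, of u "\<lambda>v. ?L v w"] lap_apply_const[OF V]
      unfolding matmul_def by (cases "u \<in> V") (auto simp: center_proj_def lap_def)
  qed
  moreover have "matmul V ?P M = M"
  proof (intro ext)
    fix u w
    show "matmul V ?P M u w = M u w"
      using sum_center_proj_mult[OF V, of u "\<psi> w"] \<psi>[of w]
      unfolding matmul_def M_def by (cases "u \<in> V \<and> w \<in> V") (auto simp: center_proj_def)
  qed
  ultimately have "is_pinv V ?L M"
    by (intro is_pinvI_symmetric[OF V]) (auto simp: M_def)
  then show ?thesis
    using pinv_eqI[OF V] by simp
qed

lemma eff_res_eq_potential_diff:
  assumes V: "finite V" and st: "s \<in> V" "t \<in> V" "s \<noteq> t"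
    and sym: "\<And>u v. A u v = A v u" and nonneg: "\<And>u v. A u v \<ge> 0" and conn: "graph_connected V A"
    and \<phi>: "\<forall>u\<in>V. lap_apply V A \<phi> u = of_bool (u = s) - of_bool (u = t)"
  shows "eff_res V A s t = \<phi> s - \<phi> t"
proof -
  let ?L = "lap V A" and ?M = "pinv V (lap V A)"
  define b where "b = (\<lambda>u. of_bool (u = s) - of_bool (u = t) :: real)"
  have b_right: "b v = (\<Sum>y\<in>V. ?L v y * \<phi> y)" if "v \<in> V" for v
    using \<phi> that unfolding b_def lap_apply_def by simp
  have b_left: "b u = (\<Sum>z\<in>V. \<phi> z * ?L z u)" if "u \<in> V" for u
    using b_right[OF that] by (simp add: lap_symmetric[of A V u, OF sym] mult.commute)
  have LML: "matmul V (matmul V ?L ?M) ?L = ?L"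
    using is_pinv_pinv_lap[OF V st(2) sym nonneg conn] unfolding is_pinv_def by simp
  have "eff_res V A s t = (\<Sum>u\<in>V. b u * (\<Sum>v\<in>V. ?M u v * b v))"
    unfolding eff_res_def b_def of_bool_def Let_def by (simp add: sum_distrib_left mult.assoc)
  also have "\<dots> = (\<Sum>u\<in>V. (\<Sum>z\<in>V. \<phi> z * ?L z u) * (\<Sum>y\<in>V. matmul V ?M ?L u y * \<phi> y))"
    using b_left b_right by (simp add: sum_matmul_right[OF V, symmetric])
  also have "\<dots> = (\<Sum>z\<in>V. \<phi> z * (\<Sum>y\<in>V. ?L z y * \<phi> y))"
    by (simp add: sum_matmul_left sum_matmul_right[OF V] LML flip: matmul_assoc[OF V])
  also have "\<dots> = (\<Sum>z\<in>V. \<phi> z * b z)"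
    using b_right by simp
  also have "\<dots> = \<phi> s - \<phi> t"
    using V st unfolding b_def by (simp add: right_diff_distrib sum_subtractf)
  finally show ?thesis .
qed

section \<open>A Poincare inequality for regular expanders\<close>

lemma rayleigh_minimizer_eigen:
  assumes V: "finite V" and sym: "\<And>u v. A u v = A v u"
    and f: "\<forall>i. i \<notin> V \<longrightarrow> f i = 0" "(\<Sum>u\<in>V. f u) = 0" "(\<Sum>u\<in>V. (f u)\<^sup>2) = 1"
    and min: "\<And>g. \<forall>i. i \<notin> V \<longrightarrow> g i = 0 \<Longrightarrow> (\<Sum>u\<in>V. g u) = 0 \<Longrightarrow>
      energy V A f * (\<Sum>u\<in>V. (g u)\<^sup>2) \<le> energy V A g"
  shows "\<forall>u\<in>V. lap_apply V A f u = energy V A f * f u"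
proof -
  define lam where "lam = energy V A f"
  define r where "r = (\<lambda>u. lap_apply V A f u - lam * f u)"
  have orth: "(\<Sum>u\<in>V. g u * r u) = 0" if g: "\<forall>i. i \<notin> V \<longrightarrow> g i = 0" "(\<Sum>u\<in>V. g u) = 0" for g
  proof -
    have "0 \<le> (energy V A g - lam * (\<Sum>u\<in>V. (g u)\<^sup>2)) * e\<^sup>2 + 2 * (\<Sum>u\<in>V. g u * r u) * e" for e
    proof -
      have "lam * (\<Sum>u\<in>V. (f u + e * g u)\<^sup>2) \<le> energy V A (\<lambda>v. f v + e * g v)"
        unfolding lam_def using f g by (intro min) (auto simp: sum.distrib sum_distrib_left[symmetric])
      moreover have "(\<Sum>u\<in>V. (f u + e * g u)\<^sup>2)
          = 1 + 2 * e * (\<Sum>u\<in>V. g u * f u) + e\<^sup>2 * (\<Sum>u\<in>V. (g u)\<^sup>2)"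
        using f(3) by (simp add: power2_sum sum.distrib sum_distrib_left algebra_simps)
      moreover have "(\<Sum>u\<in>V. g u * lap_apply V A f u) = (\<Sum>u\<in>V. g u * r u) + lam * (\<Sum>u\<in>V. g u * f u)"
        unfolding r_def by (simp add: algebra_simps sum_subtractf sum_distrib_left)
      ultimately show ?thesis
        unfolding energy_add_scaled[of V A, OF V sym] lam_def[symmetric] by (simp add: algebra_simps)
    qed
    from quadratic_nonneg_imp_linear_coeff_0[OF this] show ?thesis
      by simp
  qed
  have "(\<Sum>u\<in>V. r u) = 0"
    unfolding r_def using sum_lap_apply_eq_0[of V A, OF V sym] f(2)
    by (simp add: sum_subtractf sum_distrib_left[symmetric])
  then have "(\<Sum>u\<in>V. (if u \<in> V then r u else 0) * r u) = 0"
    by (intro orth) auto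
  then have "(\<Sum>u\<in>V. (r u)\<^sup>2) = 0"
    by (simp add: power2_eq_square)
  then show ?thesis
    using V unfolding r_def lam_def by (simp add: sum_nonneg_eq_0_iff)
qed

lemma edge_adj_symmetric: "(\<And>u v. E u v = E v u) \<Longrightarrow> edge_adj E u v = edge_adj E v u"
  unfolding edge_adj_def by auto

lemma edge_adj_nonneg: "edge_adj E u v \<ge> 0"
  unfolding edge_adj_def by auto

lemma deg_edge_adj: "finite S \<Longrightarrow> deg S (edge_adj E) u = real (card {v\<in>S. E u v})"
  unfolding deg_def edge_adj_def by (simp add: sum.If_cases Int_def conj_commute)

lemma norm_lap_apply_regular:
  assumes S: "finite S" and u: "u \<in> S" and d: "d > 0" and reg: "\<forall>v\<in>S. deg S A v = d"
  shows "(\<Sum>v\<in>S. norm_lap S A u v * g v) = lap_apply S A g u / d"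
proof -
  have "(\<Sum>v\<in>S. norm_lap S A u v * g v) = (\<Sum>v\<in>S. of_bool (u = v) * g v - A u v * g v / d)"
    unfolding norm_lap_def using u reg d by (intro sum.cong refl) (auto simp: algebra_simps)
  also have "\<dots> = lap_apply S A g u / d"
    using S u d reg by (simp add: lap_apply_eq sum_subtractf sum_divide_distrib[symmetric] diff_divide_distrib)
  finally show ?thesis .
qed

lemma centered_rayleigh_minimizer:
  assumes S: "finite S" "card S \<ge> 2" and sym: "\<And>u v. A u v = A v u"
  obtains f where "\<forall>i. i \<notin> S \<longrightarrow> f i = 0" "(\<Sum>u\<in>S. f u) = 0" "(\<Sum>u\<in>S. (f u)\<^sup>2) = 1"
    "\<forall>u\<in>S. lap_apply S A f u = energy S A f * f u"
    "\<And>g. \<forall>i. i \<notin> S \<longrightarrow> g i = 0 \<Longrightarrow> (\<Sum>u\<in>S. g u) = 0 \<Longrightarrow>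
      energy S A f * (\<Sum>u\<in>S. (g u)\<^sup>2) \<le> energy S A g"
proof -
  obtain a b where ab: "a \<in> S" "b \<in> S" "a \<noteq> b"
    using S by (metis card_le_Suc0_iff_eq not_less_eq_eq numeral_2_eq_2)
  define K where "K = {g :: 'a \<Rightarrow> real. (\<Sum>u\<in>S. g u) = 0}"
  have "closed K"
    unfolding K_def by (intro closed_Collect_eq continuous_intros continuous_on_product_coordinates)
  moreover have "(\<lambda>v. c * g v) \<in> K" if "g \<in> K" for g c
    using that unfolding K_def by (simp add: sum_distrib_left[symmetric])
  moreover define g0 where "g0 = (\<lambda>u. of_bool (u = a) - of_bool (u = b) :: real)"
  have "g0 \<in> K" "\<forall>i. i \<notin> S \<longrightarrow> g0 i = 0"
    using ab S unfolding K_def g0_def by (auto simp: sum_subtractf)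
  moreover have "(\<Sum>u\<in>S. (g0 u)\<^sup>2) = (\<Sum>u\<in>S. of_bool (u = a) + of_bool (u = b))"
    using ab unfolding g0_def by (intro sum.cong) auto
  then have "(\<Sum>u\<in>S. (g0 u)\<^sup>2) > 0"
    using ab S by (simp add: sum.distrib)
  ultimately obtain f where f: "f \<in> K" "\<forall>i. i \<notin> S \<longrightarrow> f i = 0" "(\<Sum>u\<in>S. (f u)\<^sup>2) = 1"
    and min: "\<And>g. g \<in> K \<Longrightarrow> \<forall>i. i \<notin> S \<longrightarrow> g i = 0 \<Longrightarrow> energy S A f * (\<Sum>u\<in>S. (g u)\<^sup>2) \<le> energy S A g"
    using energy_rayleigh_minimizer[of S S K g0 A] S(1) by blast
  moreover have "\<forall>u\<in>S. lap_apply S A f u = energy S A f * f u"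
    using f min unfolding K_def by (intro rayleigh_minimizer_eigen[OF S(1) sym]) auto
  ultimately show thesis
    using that unfolding K_def by blast
qed

text \<open>The constant vector is an eigenvector of the normalized Laplacian for the eigenvalue \<open>0 < \<gamma>\<close>,
  so every eigenvalue below \<open>\<gamma>\<close> has only constant eigenvectors.\<close>
lemma spectral_gap_le_eigenvalue:
  fixes E :: "'a \<Rightarrow> 'a \<Rightarrow> bool" and d :: nat and \<gamma> :: real
  assumes S: "finite S" "card S \<ge> 2" and d: "d \<ge> 1" and reg: "\<forall>u\<in>S. card {v\<in>S. E u v} = d"
    and eig: "second_eig_ge S (norm_lap S (edge_adj E)) \<gamma>" and \<gamma>: "\<gamma> > 0"
    and f: "(\<Sum>u\<in>S. f u) = 0" "\<exists>v\<in>S. f v \<noteq> 0" "\<forall>u\<in>S. lap_apply S (edge_adj E) f u = lam * f u"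
  shows "\<gamma> * d \<le> lam"
proof (rule ccontr)
  let ?A = "edge_adj E"
  assume "\<not> \<gamma> * d \<le> lam"
  then have "lam / d < \<gamma>"
    using d by (simp add: divide_less_eq mult.commute)
  have deg: "\<forall>u\<in>S. deg S ?A u = real d"
    using reg deg_edge_adj[OF S(1)] by simp
  have "is_eigvec S (norm_lap S ?A) (lam / d) f"
    unfolding is_eigvec_def using d f(2,3) norm_lap_apply_regular[OF S(1) _ _ deg] by simp
  moreover have "is_eigvec S (norm_lap S ?A) 0 (\<lambda>_. 1)"
    unfolding is_eigvec_def
  proof (intro conjI ballI)
    fix u
    assume "u \<in> S"
    then show "(\<Sum>v\<in>S. norm_lap S ?A u v * 1) = 0 * 1"
      using norm_lap_apply_regular[OF S(1) \<open>u \<in> S\<close> _ deg, of "\<lambda>_. 1"] lap_apply_const[OF S(1)] d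
      by simp
  qed (use f(2) in auto)
  ultimately obtain c where c: "\<forall>u\<in>S. f u = c * 1"
    using eig \<open>lam / d < \<gamma>\<close> \<gamma> unfolding second_eig_ge_def by blast
  moreover have "c = 0"
    using c f(1) S by auto
  ultimately show False
    using f(2) by simp
qed

lemma poincare_inequality:
  fixes E :: "'a \<Rightarrow> 'a \<Rightarrow> bool" and d :: nat and \<gamma> :: real
  assumes S: "finite S" "card S \<ge> 2" and Esym: "\<And>u v. E u v = E v u"
    and d: "d \<ge> 1" and reg: "\<forall>u\<in>S. card {v\<in>S. E u v} = d"
    and eig: "second_eig_ge S (norm_lap S (edge_adj E)) \<gamma>"
  shows "\<gamma> * d * (\<Sum>u\<in>S. (p u - (\<Sum>v\<in>S. p v) / card S)\<^sup>2) \<le> energy S (edge_adj E) p"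
proof (cases "\<gamma> > 0")
  case False
  then show ?thesis
    using energy_nonneg[of S "edge_adj E", OF S(1) edge_adj_symmetric[of E, OF Esym] edge_adj_nonneg]
    by (smt (verit) mult_nonpos_nonneg of_nat_0_le_iff sum_nonneg zero_le_power2)
next
  case True
  let ?A = "edge_adj E"
  have sym: "\<And>u v. ?A u v = ?A v u"
    using edge_adj_symmetric[of E, OF Esym] by blast
  obtain f where f: "\<forall>i. i \<notin> S \<longrightarrow> f i = 0" "(\<Sum>u\<in>S. f u) = 0" "(\<Sum>u\<in>S. (f u)\<^sup>2) = 1"
    and eigen: "\<forall>u\<in>S. lap_apply S ?A f u = energy S ?A f * f u"
    and min: "\<And>g. \<forall>i. i \<notin> S \<longrightarrow> g i = 0 \<Longrightarrow> (\<Sum>u\<in>S. g u) = 0 \<Longrightarrow>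
      energy S ?A f * (\<Sum>u\<in>S. (g u)\<^sup>2) \<le> energy S ?A g"
    by (rule centered_rayleigh_minimizer[OF S sym]) (rule that)
  have "\<exists>v\<in>S. f v \<noteq> 0"
  proof (rule ccontr)
    assume "\<not> (\<exists>v\<in>S. f v \<noteq> 0)"
    then show False
      using f(3) by simp
  qed
  then have gap: "\<gamma> * d \<le> energy S ?A f"
    using spectral_gap_le_eigenvalue[OF S d reg eig True f(2) _ eigen] by blast
  define m where "m = (\<Sum>v\<in>S. p v) / card S"
  define g where "g = (\<lambda>u. if u \<in> S then p u - m else 0)"
  have "\<forall>i. i \<notin> S \<longrightarrow> g i = 0" "(\<Sum>u\<in>S. g u) = 0"
    using S unfolding g_def m_def by (auto simp: sum_subtractf)
  then have "energy S ?A f * (\<Sum>u\<in>S. (g u)\<^sup>2) \<le> energy S ?A g"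
    by (rule min)
  moreover have "energy S ?A g = energy S ?A p"
    using energy_add_const[of S ?A, OF S(1) sym, of p "- m"] energy_cong[of S g "\<lambda>v. p v + - m"]
    by (simp add: g_def)
  moreover have "\<gamma> * d * (\<Sum>u\<in>S. (g u)\<^sup>2) \<le> energy S ?A f * (\<Sum>u\<in>S. (g u)\<^sup>2)"
    using gap by (intro mult_right_mono sum_nonneg) auto
  ultimately show ?thesis
    unfolding g_def m_def by simp
qed

lemma sum_insert_two:
  assumes "finite S" "s \<notin> S" "t \<notin> S" "s \<noteq> t"
  shows "sum f (S \<union> {s, t}) = f s + f t + sum f S"
proof -
  have "S \<union> {s, t} = insert s (insert t S)"
    by auto
  then show ?thesis
    using assms by (simp add: algebra_simps)
qed

lemma sum_squares_eq_sum_sq_dev_mean: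
  fixes f :: "'a \<Rightarrow> real" and m :: real
  assumes "finite S" "S \<noteq> {}"
  defines "m \<equiv> (\<Sum>u\<in>S. f u) / card S"
  shows "(\<Sum>u\<in>S. (f u)\<^sup>2) = (\<Sum>u\<in>S. (f u - m)\<^sup>2) + card S * m\<^sup>2"
proof -
  have "(\<Sum>u\<in>S. (f u - m)\<^sup>2) = (\<Sum>u\<in>S. (f u)\<^sup>2) - (\<Sum>u\<in>S. 2 * f u * m) + card S * m\<^sup>2"
    by (simp add: power2_diff sum.distrib sum_subtractf)
  also have "\<dots> = (\<Sum>u\<in>S. (f u)\<^sup>2) - 2 * (\<Sum>u\<in>S. f u) * m + card S * m\<^sup>2"
    by (simp add: sum_distrib_left sum_distrib_right mult.assoc)
  moreover have "(\<Sum>u\<in>S. f u) = card S * m"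
    using assms by simp
  ultimately show ?thesis
    by (simp add: power2_eq_square)
qed

text \<open>With \<open>P = x m + T\<close>, the two lower bounds give \<open>P\<^sup>2 \<le> 2 (x m)\<^sup>2 + 2 T\<^sup>2 \<le> P (2x/n + 2/g)\<close>.\<close>
lemma excess_bound:
  fixes x n g P m T W :: real
  assumes x: "x > 0" and n: "n > 0" and g: "g > 0" and P: "P = x * m + T"
    and T: "T\<^sup>2 \<le> x * W" and W: "W \<ge> 0" and lower: "g * W + n * m\<^sup>2 \<le> P / x"
  shows "0 \<le> P" "P \<le> 2 * x / n + 2 / g"
proof -
  have "x * (g * W) + x * (n * m\<^sup>2) \<le> P"
    using lower x by (simp add: le_divide_eq algebra_simps)
  moreover have "0 \<le> x * (g * W)" "0 \<le> x * (n * m\<^sup>2)"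
    using x g n W by simp_all
  ultimately have gW: "x * (g * W) \<le> P" and nm: "x * (n * m\<^sup>2) \<le> P"
    by linarith+
  then show P0: "0 \<le> P"
    using x n by (smt (verit) mult_nonneg_nonneg zero_le_power2)
  have "P\<^sup>2 \<le> 2 * (x * m)\<^sup>2 + 2 * T\<^sup>2"
    unfolding P using sum_squares_bound[of "x * m" T] by (simp add: power2_sum)
  also have "\<dots> \<le> 2 * (x * P / n) + 2 * (P / g)"
  proof -
    have "(x * m)\<^sup>2 \<le> x * P / n"
      using nm x n by (simp add: le_divide_eq power2_eq_square algebra_simps)
    moreover have "g * T\<^sup>2 \<le> P"
      using mult_left_mono[OF T, of g] gW g by (simp only: mult.left_commute) linarith
    then have "T\<^sup>2 \<le> P / g"
      using g by (simp add: le_divide_eq mult.commute)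
    ultimately show ?thesis
      by simp
  qed
  also have "\<dots> = P * (2 * x / n + 2 / g)"
    by (simp add: algebra_simps)
  finally show "P \<le> 2 * x / n + 2 / g"
    using P0 x n g by (cases "P = 0") (simp_all add: power2_eq_square)
qed

text \<open>Here \<open>a\<close> is the potential at the source and \<open>N\<close> its neighbourhood; the hypotheses are the
  equation at the source and the energy identity combined with a Poincare inequality with
  constant \<open>g\<close>.\<close>
lemma source_mass_bound:
  fixes \<phi> :: "'a \<Rightarrow> real" and a g :: real
  assumes S: "finite S" "S \<noteq> {}" and N: "N \<subseteq> S" "N \<noteq> {}" and g: "g > 0"
    and source: "card N * a - (\<Sum>v\<in>N. \<phi> v) = 1"
    and energy: "g * (\<Sum>u\<in>S. (\<phi> u - (\<Sum>v\<in>S. \<phi> v) / card S)\<^sup>2)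
      \<le> a * (\<Sum>v\<in>N. \<phi> v) - (\<Sum>v\<in>N. (\<phi> v)\<^sup>2) - (\<Sum>v\<in>S. (\<phi> v)\<^sup>2)"
  shows "0 \<le> (\<Sum>v\<in>N. \<phi> v)" "(\<Sum>v\<in>N. \<phi> v) \<le> 2 * card N / card S + 2 / g"
proof -
  define x n where "x = real (card N)" and "n = real (card S)"
  define P Q where "P = (\<Sum>v\<in>N. \<phi> v)" and "Q = (\<Sum>v\<in>N. (\<phi> v)\<^sup>2)"
  define m where "m = (\<Sum>v\<in>S. \<phi> v) / n"
  define W where "W = (\<Sum>v\<in>S. (\<phi> v - m)\<^sup>2)"
  have fin_N: "finite N"
    using N S finite_subset by blast
  have x: "x > 0" and n: "n > 0"
    using S N fin_N unfolding x_def n_def by (simp_all add: card_gt_0_iff)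
  have a: "a = (1 + P) / x"
    using source x unfolding x_def P_def by (simp add: field_simps)
  have "g * W \<le> a * P - Q - (W + n * m\<^sup>2)"
    using energy sum_squares_eq_sum_sq_dev_mean[OF S, of \<phi>]
    unfolding P_def Q_def W_def m_def n_def by simp
  then have energy_bound: "g * W \<le> (P + P\<^sup>2) / x - Q - W - n * m\<^sup>2"
    unfolding a by (simp add: power2_eq_square add_divide_distrib distrib_right)
  have "P\<^sup>2 \<le> Q * x"
    unfolding P_def Q_def x_def by (rule sum_squared_le_sum_of_squares)
  then have "P\<^sup>2 / x \<le> Q"
    using x by (simp add: divide_le_eq)
  moreover have W: "W \<ge> 0"
    unfolding W_def by (intro sum_nonneg) auto
  ultimately have lower: "g * W + n * m\<^sup>2 \<le> P / x"
    using energy_bound by (simp add: add_divide_distrib)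
  define T where "T = (\<Sum>v\<in>N. \<phi> v - m)"
  have "P = x * m + T"
    unfolding P_def T_def x_def by (simp add: sum_subtractf)
  moreover have "T\<^sup>2 \<le> x * W"
  proof -
    have "T\<^sup>2 \<le> (\<Sum>v\<in>N. (\<phi> v - m)\<^sup>2) * x"
      unfolding T_def x_def by (rule sum_squared_le_sum_of_squares)
    also have "\<dots> \<le> W * x"
      unfolding W_def using x N S by (intro mult_right_mono sum_mono2) auto
    finally show ?thesis
      by (simp add: mult.commute)
  qed
  ultimately show "0 \<le> (\<Sum>v\<in>N. \<phi> v)" "(\<Sum>v\<in>N. \<phi> v) \<le> 2 * card N / card S + 2 / g"
    using excess_bound[OF x n g _ _ W lower] unfolding P_def x_def n_def by auto
qed

lemma error_term_bounds:
  fixes x d ds n \<gamma> :: real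
  assumes x: "x \<ge> 1" and d: "d \<ge> 1" and ds: "ds \<ge> x" and n: "n \<ge> 2 * d ^ 3"
    and ln_n: "ln n \<ge> 1 / 2" and ds_ln: "ds * ln n \<le> d" and \<gamma>: "\<gamma> > 0"
  shows "2 / n + 2 / (\<gamma> * d * x) \<le> (4 + 4 / \<gamma>) * ln n / (d * x)"
    and "(4 + 4 / \<gamma>) * ln n / (d * x) \<le> (4 + 4 / \<gamma>) / (ds * x)"
proof -
  have dx: "d * x > 0"
    using x d by simp
  have n0: "n > 0"
    using n one_le_power[OF d, of 3] by linarith
  have "x * ln n \<le> d"
    using mult_right_mono[OF ds, of "ln n"] ln_n ds_ln by linarith
  then have "d * x * ln n \<le> d * d"
    using d by (simp add: mult.assoc mult_left_mono)
  also have "\<dots> \<le> d ^ 3"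
    using mult_left_mono[OF d, of "d * d"] d by (simp add: power3_eq_cube)
  also have "\<dots> \<le> (4 * ln n * ln n) * n / 2"
  proof -
    have "1 \<le> 4 * ln n * ln n"
      using mult_mono[OF ln_n ln_n] ln_n by (simp add: mult.commute)
    from mult_right_mono[OF this, of n] have "n \<le> (4 * ln n * ln n) * n"
      using n0 by simp
    then show ?thesis
      using n by linarith
  qed
  finally have "d * x \<le> 2 * ln n * n"
    using ln_n by (simp add: mult.commute mult.left_commute)
  then have "2 / n \<le> 4 * ln n / (d * x)"
    using n0 dx by (simp add: field_simps)
  moreover have "2 / (\<gamma> * d * x) \<le> (4 / \<gamma>) * ln n / (d * x)"
    using ln_n \<gamma> dx by (simp add: field_simps)
  ultimately show "2 / n + 2 / (\<gamma> * d * x) \<le> (4 + 4 / \<gamma>) * ln n / (d * x)"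
    by (simp add: add_divide_distrib distrib_right)
  have "ln n / (d * x) \<le> 1 / (ds * x)"
    using ds_ln d ds x by (simp add: field_simps)
  from mult_left_mono[OF this, of "4 + 4 / \<gamma>"]
  show "(4 + 4 / \<gamma>) * ln n / (d * x) \<le> (4 + 4 / \<gamma>) / (ds * x)"
    using \<gamma> by simp
qed

section \<open>The lower-bound construction\<close>

locale lower_bound_construction =
  fixes S1 S2 :: "'a set" and E1 :: "'a \<Rightarrow> 'a \<Rightarrow> bool" and N1 N2 :: "'a set" and s t :: 'a
  assumes finite_S1: "finite S1" and finite_S2: "finite S2" and disjoint: "S1 \<inter> S2 = {}"
    and s_notin: "s \<notin> S1 \<union> S2" and t_notin: "t \<notin> S1 \<union> S2" and s_ne_t: "s \<noteq> t"
    and E1_in_S1: "\<forall>u v. E1 u v \<longrightarrow> u \<in> S1 \<and> v \<in> S1" and E1_sym: "\<forall>u v. E1 u v = E1 v u"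
    and N1_subset: "N1 \<subseteq> S1" and N2_subset: "N2 \<subseteq> S2"
begin

abbreviation adj where "adj \<equiv> constr_adj S1 S2 E1 N1 N2 s t"

lemma adj_symmetric: "adj u v = adj v u"
  unfolding constr_adj_def using E1_sym by auto

lemma adj_nonneg: "adj u v \<ge> 0"
  unfolding constr_adj_def by auto

lemma adj_S1: "u \<in> S1 \<Longrightarrow> v \<in> S1 \<Longrightarrow> adj u v = edge_adj E1 u v"
  using s_notin t_notin unfolding constr_adj_def edge_adj_def by auto

lemma adj_S2: "u \<in> S2 \<Longrightarrow> v \<in> S2 \<Longrightarrow> adj u v = 0"
  using s_notin t_notin disjoint E1_in_S1 unfolding constr_adj_def by auto

lemma adj_source: "u \<in> S1 \<union> S2 \<Longrightarrow> adj u s = of_bool (u \<in> N1 \<union> N2)"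
  using s_notin t_notin s_ne_t unfolding constr_adj_def by auto

lemma adj_sink: "u \<in> S1 \<union> S2 \<Longrightarrow> adj u t = 1"
  unfolding constr_adj_def by auto

lemma adj_source_sink: "adj s s = 0" "adj s t = 0" "adj t t = 0"
  using s_notin t_notin s_ne_t N1_subset N2_subset E1_in_S1 unfolding constr_adj_def by auto

context
  fixes S :: "'a set"
  assumes S: "S = S1 \<or> S = S2"
begin

lemma side_props: "finite S" "S \<subseteq> S1 \<union> S2" "s \<notin> S" "t \<notin> S"
  using S finite_S1 finite_S2 s_notin t_notin by auto

lemma graph_connected_side:
  assumes "w \<in> S" "w \<in> N1 \<union> N2"
  shows "graph_connected (S \<union> {s, t}) adj"
  unfolding graph_connected_def
proof (intro allI impI ballI)
  fix \<phi> :: "'a \<Rightarrow> real" and u v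
  assume edges: "\<forall>u\<in>S \<union> {s, t}. \<forall>v\<in>S \<union> {s, t}. adj u v \<noteq> 0 \<longrightarrow> \<phi> u = \<phi> v"
  have to_t: "\<phi> v = \<phi> t" if "v \<in> S" for v
  proof -
    have "adj v t \<noteq> 0"
      using adj_sink side_props(2) that by auto
    then show ?thesis
      using edges that by blast
  qed
  moreover have "\<phi> s = \<phi> t"
  proof -
    have "adj w s \<noteq> 0"
      using adj_source side_props(2) assms by auto
    then have "\<phi> w = \<phi> s"
      using edges assms(1) by blast
    then show ?thesis
      using to_t[OF assms(1)] by simp
  qed
  moreover assume "u \<in> S \<union> {s, t}" "v \<in> S \<union> {s, t}"
  ultimately show "\<phi> u = \<phi> v"
    by auto
qed

lemma lap_apply_side_source:
  "lap_apply (S \<union> {s, t}) adj \<phi> s = (\<Sum>v\<in>S \<inter> (N1 \<union> N2). \<phi> s - \<phi> v)"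
proof -
  have "lap_apply (S \<union> {s, t}) adj \<phi> s = (\<Sum>v\<in>S. of_bool (v \<in> N1 \<union> N2) * (\<phi> s - \<phi> v))"
    using side_props adj_source_sink adj_source adj_symmetric s_ne_t
    by (simp add: lap_apply_eq_sum_diff sum_insert_two subset_iff)
  also have "\<dots> = (\<Sum>v\<in>S. if v \<in> N1 \<union> N2 then \<phi> s - \<phi> v else 0)"
    by (intro sum.cong) auto
  also have "\<dots> = (\<Sum>v\<in>S \<inter> (N1 \<union> N2). \<phi> s - \<phi> v)"
    using side_props(1) by (rule sum.inter_restrict[symmetric])
  finally show ?thesis .
qed

lemma lap_apply_side_sink: "lap_apply (S \<union> {s, t}) adj \<phi> t = (\<Sum>v\<in>S. \<phi> t - \<phi> v)"
  using side_props adj_source_sink adj_sink adj_symmetric s_ne_t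
  by (simp add: lap_apply_eq_sum_diff sum_insert_two subset_iff)

lemma lap_apply_side_inner:
  assumes "u \<in> S"
  shows "lap_apply (S \<union> {s, t}) adj \<phi> u
    = of_bool (u \<in> N1 \<union> N2) * (\<phi> u - \<phi> s) + (\<phi> u - \<phi> t) + (\<Sum>v\<in>S. adj u v * (\<phi> u - \<phi> v))"
  using assms side_props adj_source adj_sink s_ne_t
  by (simp add: lap_apply_eq_sum_diff sum_insert_two subset_iff)

end

definition S2_potential :: "'a \<Rightarrow> real" where
  "S2_potential u = (if u = s then 2 else of_bool (u \<in> N2)) / card N2"

lemma lap_apply_S2_potential:
  assumes N2: "N2 \<noteq> {}" and u: "u \<in> S2 \<union> {s, t}"
  shows "lap_apply (S2 \<union> {s, t}) adj S2_potential u = of_bool (u = s) - of_bool (u = t)"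
proof -
  have side: "S2 = S1 \<or> S2 = S2"
    by simp
  let ?\<phi> = S2_potential and ?k = "real (card N2)"
  have k: "?k > 0"
    using N2 N2_subset finite_S2 by (simp add: card_gt_0_iff finite_subset)
  have \<phi>_S2: "?\<phi> v = of_bool (v \<in> N2) / ?k" if "v \<in> S2" for v
    using that s_notin by (auto simp: S2_potential_def)
  have \<phi>_t: "?\<phi> t = 0"
    using s_ne_t t_notin N2_subset by (auto simp: S2_potential_def)
  consider "u = s" | "u = t" | "u \<in> S2"
    using u by auto
  then show ?thesis
  proof cases
    case 1
    have "S2 \<inter> (N1 \<union> N2) = N2"
      using N1_subset N2_subset disjoint by auto
    moreover have "?\<phi> s - ?\<phi> v = 1 / ?k" if "v \<in> N2" for v
      using that N2_subset \<phi>_S2[of v] by (auto simp: S2_potential_def field_simps)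
    then have "(\<Sum>v\<in>N2. ?\<phi> s - ?\<phi> v) = ?k * (1 / ?k)"
      by simp
    ultimately show ?thesis
      using 1 lap_apply_side_source[OF side] k s_ne_t by simp
  next
    case 2
    have "(\<Sum>v\<in>S2. ?\<phi> v) = 1"
      using \<phi>_S2 finite_S2 N2_subset k
      by (simp add: sum_divide_distrib[symmetric] sum.inter_restrict[symmetric] Int_absorb1)
    then show ?thesis
      using 2 lap_apply_side_sink[OF side] \<phi>_t s_ne_t by (simp add: sum_subtractf)
  next
    case 3
    have "(\<Sum>v\<in>S2. adj u v * (?\<phi> u - ?\<phi> v)) = 0"
      using adj_S2 3 by simp
    moreover have "u \<notin> N1" "u \<noteq> s" "u \<noteq> t"
      using 3 N1_subset disjoint s_notin t_notin by auto
    ultimately show ?thesis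
      using lap_apply_side_inner[OF side 3, of ?\<phi>] \<phi>_S2[OF 3] \<phi>_t k
      by (cases "u \<in> N2") (simp_all add: S2_potential_def)
  qed
qed

lemma eff_res_S2:
  assumes "N2 \<noteq> {}"
  shows "eff_res (S2 \<union> {s, t}) adj s t = 2 / card N2"
proof -
  obtain w where "w \<in> S2" "w \<in> N1 \<union> N2"
    using assms N2_subset by blast
  then have "graph_connected (S2 \<union> {s, t}) adj"
    by (intro graph_connected_side) auto
  then have "eff_res (S2 \<union> {s, t}) adj s t = S2_potential s - S2_potential t"
    using finite_S2 s_ne_t lap_apply_S2_potential[OF assms]
    by (intro eff_res_eq_potential_diff adj_symmetric adj_nonneg) auto
  then show ?thesis
    using s_ne_t t_notin N2_subset by (auto simp: S2_potential_def)
qed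

lemma potential_S1_identities:
  fixes \<phi> :: "'a \<Rightarrow> real"
  assumes \<phi>: "\<forall>u\<in>S1 \<union> {s, t}. lap_apply (S1 \<union> {s, t}) adj \<phi> u = of_bool (u = s) - of_bool (u = t)"
    and \<phi>_t: "\<phi> t = 0"
  shows "card N1 * \<phi> s - (\<Sum>v\<in>N1. \<phi> v) = 1"
    and "energy S1 (edge_adj E1) \<phi> = \<phi> s * (\<Sum>v\<in>N1. \<phi> v) - (\<Sum>v\<in>N1. (\<phi> v)\<^sup>2) - (\<Sum>v\<in>S1. (\<phi> v)\<^sup>2)"
proof -
  have side: "S1 = S1 \<or> S1 = S2"
    by simp
  have "S1 \<inter> (N1 \<union> N2) = N1"
    using N1_subset N2_subset disjoint by auto
  then show "card N1 * \<phi> s - (\<Sum>v\<in>N1. \<phi> v) = 1"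
    using \<phi> lap_apply_side_source[OF side, of \<phi>] s_ne_t by (simp add: sum_subtractf)
  have inner: "lap_apply S1 (edge_adj E1) \<phi> u = of_bool (u \<in> N1) * (\<phi> s - \<phi> u) - \<phi> u"
    if u: "u \<in> S1" for u
  proof -
    have "(\<Sum>v\<in>S1. adj u v * (\<phi> u - \<phi> v)) = lap_apply S1 (edge_adj E1) \<phi> u"
      using u finite_S1 adj_S1 by (simp add: lap_apply_eq_sum_diff)
    moreover have "u \<notin> N2" "u \<noteq> s" "u \<noteq> t"
      using u N2_subset disjoint s_notin t_notin by auto
    moreover have "lap_apply (S1 \<union> {s, t}) adj \<phi> u = 0"
      using \<phi> u \<open>u \<noteq> s\<close> \<open>u \<noteq> t\<close> by simp
    ultimately show ?thesis
      using lap_apply_side_inner[OF side u, of \<phi>] \<phi>_t by (cases "u \<in> N1") (simp_all add: algebra_simps)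
  qed
  have "energy S1 (edge_adj E1) \<phi> = (\<Sum>u\<in>S1. of_bool (u \<in> N1) * (\<phi> s * \<phi> u - (\<phi> u)\<^sup>2)) - (\<Sum>u\<in>S1. (\<phi> u)\<^sup>2)"
    unfolding energy_def sum_subtractf[symmetric]
    by (intro sum.cong refl) (simp add: inner algebra_simps power2_eq_square)
  also have "\<dots> = \<phi> s * (\<Sum>v\<in>N1. \<phi> v) - (\<Sum>v\<in>N1. (\<phi> v)\<^sup>2) - (\<Sum>v\<in>S1. (\<phi> v)\<^sup>2)"
    using finite_S1 N1_subset
    by (simp add: sum.inter_restrict[symmetric] Int_absorb1 sum_subtractf sum_distrib_left)
  finally show "energy S1 (edge_adj E1) \<phi> = \<phi> s * (\<Sum>v\<in>N1. \<phi> v) - (\<Sum>v\<in>N1. (\<phi> v)\<^sup>2) - (\<Sum>v\<in>S1. (\<phi> v)\<^sup>2)" .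
qed

lemma S1_potential:
  assumes "N1 \<noteq> {}"
  obtains \<phi> where "\<phi> t = 0"
    "\<forall>u\<in>S1 \<union> {s, t}. lap_apply (S1 \<union> {s, t}) adj \<phi> u = of_bool (u = s) - of_bool (u = t)"
    "eff_res (S1 \<union> {s, t}) adj s t = \<phi> s"
proof -
  let ?V = "S1 \<union> {s, t}"
  have V: "finite ?V" "s \<in> ?V" "t \<in> ?V"
    using finite_S1 by auto
  obtain w where "w \<in> S1" "w \<in> N1 \<union> N2"
    using assms N1_subset by blast
  then have conn: "graph_connected ?V adj"
    by (intro graph_connected_side) auto
  have "(\<Sum>u\<in>?V. of_bool (u = s) - of_bool (u = t)) = (0::real)"
    using V by (simp add: sum_subtractf)
  then obtain \<phi> where \<phi>_t: "\<phi> t = 0"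
    and \<phi>: "\<forall>u\<in>?V. lap_apply ?V adj \<phi> u = of_bool (u = s) - of_bool (u = t)"
    using lap_solvable[OF V(1,3) adj_symmetric adj_nonneg conn] by blast
  moreover have "eff_res ?V adj s t = \<phi> s"
    using eff_res_eq_potential_diff[OF V s_ne_t adj_symmetric adj_nonneg conn \<phi>] \<phi>_t by simp
  ultimately show thesis
    using that by blast
qed

lemma eff_res_S1_excess:
  fixes d :: nat and \<gamma> :: real
  assumes d: "d \<ge> 1" and reg: "\<forall>u\<in>S1. card {v\<in>S1. E1 u v} = d"
    and eig: "second_eig_ge S1 (norm_lap S1 (edge_adj E1)) \<gamma>" and \<gamma>: "\<gamma> > 0"
    and N1: "card N1 > 0" and S1: "card S1 \<ge> 2"
  defines "r \<equiv> eff_res (S1 \<union> {s, t}) adj s t - 1 / card N1"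
  shows "0 \<le> r" "r \<le> 2 / card S1 + 2 / (\<gamma> * d * card N1)"
proof -
  have "N1 \<noteq> {}" "S1 \<noteq> {}"
    using N1 S1 by auto
  obtain \<phi> where \<phi>_t: "\<phi> t = 0"
    and \<phi>: "\<forall>u\<in>S1 \<union> {s, t}. lap_apply (S1 \<union> {s, t}) adj \<phi> u = of_bool (u = s) - of_bool (u = t)"
    and res: "eff_res (S1 \<union> {s, t}) adj s t = \<phi> s"
    by (rule S1_potential[OF \<open>N1 \<noteq> {}\<close>])
  have "\<gamma> * d * (\<Sum>u\<in>S1. (\<phi> u - (\<Sum>v\<in>S1. \<phi> v) / card S1)\<^sup>2) \<le> energy S1 (edge_adj E1) \<phi>"
    using E1_sym by (intro poincare_inequality[OF finite_S1 S1 _ d reg eig]) auto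
  then have P: "0 \<le> (\<Sum>v\<in>N1. \<phi> v)" "(\<Sum>v\<in>N1. \<phi> v) \<le> 2 * card N1 / card S1 + 2 / (\<gamma> * d)"
    using source_mass_bound[OF finite_S1 \<open>S1 \<noteq> {}\<close> N1_subset \<open>N1 \<noteq> {}\<close>, of "\<gamma> * d" "\<phi> s" \<phi>]
      potential_S1_identities[OF \<phi> \<phi>_t] \<gamma> d by auto
  have r: "r = (\<Sum>v\<in>N1. \<phi> v) / card N1"
    using potential_S1_identities(1)[OF \<phi> \<phi>_t] res N1 unfolding r_def by (simp add: field_simps)
  show "0 \<le> r"
    unfolding r using P(1) by simp
  have "r \<le> (2 * card N1 / card S1 + 2 / (\<gamma> * d)) / card N1"
    unfolding r using P(2) by (intro divide_right_mono) auto
  also have "\<dots> = 2 / card S1 + 2 / (\<gamma> * d * card N1)"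
    using N1 by (simp add: field_simps)
  finally show "r \<le> 2 / card S1 + 2 / (\<gamma> * d * card N1)" .
qed

lemma eff_res_bounds:
  fixes d ds x :: nat and \<gamma> :: real
  assumes d: "d \<ge> 1" and reg: "\<forall>u\<in>S1. card {v\<in>S1. E1 u v} = d"
    and eig: "second_eig_ge S1 (norm_lap S1 (edge_adj E1)) \<gamma>" and \<gamma>: "\<gamma> > 0"
    and x: "card N1 = x" "0 < x" "x \<le> ds" and N2: "card N2 = ds - x"
    and ds_ln: "real d \<ge> real ds * ln (card S1)" and S1: "card S1 \<ge> 2 * d ^ 3"
  shows "\<bar>eff_res (S1 \<union> {s, t}) adj s t - 1 / x\<bar> \<le> (4 + 4 / \<gamma>) * ln (card S1) / (real d * real x)
    \<and> \<bar>eff_res (S1 \<union> {s, t}) adj s t - 1 / x\<bar> \<le> (4 + 4 / \<gamma>) / (real ds * real x)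
    \<and> (x < ds \<longrightarrow> eff_res (S2 \<union> {s, t}) adj s t = 2 / (real ds - real x))"
proof (intro conjI impI)
  have "d ^ 3 \<ge> 1"
    using d by simp
  then have "card S1 \<ge> 2"
    using S1 by linarith
  then have "ln 2 \<le> ln (card S1)"
    by simp
  then have "ln (card S1) \<ge> 1 / 2"
    using ln2_ge_two_thirds by linarith
  moreover have "real (card S1) \<ge> 2 * real d ^ 3"
    using S1 by (metis of_nat_le_iff of_nat_mult of_nat_numeral of_nat_power)
  ultimately have bounds: "2 / card S1 + 2 / (\<gamma> * d * x) \<le> (4 + 4 / \<gamma>) * ln (card S1) / (real d * real x)"
      "(4 + 4 / \<gamma>) * ln (card S1) / (real d * real x) \<le> (4 + 4 / \<gamma>) / (real ds * real x)"
    using error_term_bounds[of x d ds "card S1" \<gamma>] d x ds_ln \<gamma> by auto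
  have "\<bar>eff_res (S1 \<union> {s, t}) adj s t - 1 / x\<bar> \<le> 2 / card S1 + 2 / (\<gamma> * d * x)"
    using eff_res_S1_excess[OF d reg eig \<gamma>] \<open>card S1 \<ge> 2\<close> x by simp
  with bounds show "\<bar>eff_res (S1 \<union> {s, t}) adj s t - 1 / x\<bar> \<le> (4 + 4 / \<gamma>) * ln (card S1) / (real d * real x)"
      "\<bar>eff_res (S1 \<union> {s, t}) adj s t - 1 / x\<bar> \<le> (4 + 4 / \<gamma>) / (real ds * real x)"
    by linarith+
next
  assume "x < ds"
  then have "N2 \<noteq> {}"
    using N2 by auto
  then show "eff_res (S2 \<union> {s, t}) adj s t = 2 / (real ds - real x)"
    using eff_res_S2 N2 \<open>x < ds\<close> by simp
qed

end

theorem lemma5p1: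
  fixes gam :: real
  assumes "gam > 0"
  shows "\<exists>C>0. \<forall>(S1::nat set) S2 E1 N1 N2 s t (d::nat) (ds::nat) (x::nat).
    finite S1 \<and> finite S2 \<and> S1 \<inter> S2 = {} \<and> s \<notin> S1 \<union> S2 \<and> t \<notin> S1 \<union> S2 \<and> s \<noteq> t
    \<and> (\<forall>u v. E1 u v \<longrightarrow> u \<in> S1 \<and> v \<in> S1) \<and> (\<forall>u v. E1 u v = E1 v u) \<and> (\<forall>u. \<not> E1 u u)
    \<and> d \<ge> 1 \<and> (\<forall>u\<in>S1. card {v\<in>S1. E1 u v} = d)
    \<and> second_eig_ge S1 (norm_lap S1 (edge_adj E1)) gam
    \<and> N1 \<subseteq> S1 \<and> card N1 = x \<and> N2 \<subseteq> S2 \<and> card N2 = ds - x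
    \<and> 0 < x \<and> x \<le> ds
    \<and> real d \<ge> real ds * ln (real (card S1)) \<and> real d \<ge> (ln (real (card S1)))\<^sup>2
    \<and> card S1 \<ge> 2 * d ^ 3
    \<longrightarrow> (let A = constr_adj S1 S2 E1 N1 N2 s t;
             r1 = eff_res (S1 \<union> {s, t}) A s t;
             r2 = eff_res (S2 \<union> {s, t}) A s t
         in \<bar>r1 - 1 / real x\<bar> \<le> C * ln (real (card S1)) / (real d * real x)
          \<and> \<bar>r1 - 1 / real x\<bar> \<le> C / (real ds * real x)
          \<and> (x < ds \<longrightarrow> r2 = 2 / (real ds - real x)))"
proof (intro exI[of _ "4 + 4 / gam"] conjI allI impI)
  show "4 + 4 / gam > 0"
    using assms by (simp add: add_pos_pos)
qed (insert assms, unfold Let_def, elim conjE,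
  rule lower_bound_construction.eff_res_bounds[OF lower_bound_construction.intro], assumption+)

end
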